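(* Let $\Pi$ be a problem and $\Pi'_1$ its derived simplified problem (as in the context). Let $\mathcal G_{n,\Delta}$ be a $\Sigma$-input-labeled graph class consisting of $n$-node graphs with maximum degree $\Delta$, such that the input labels of every graph in $\mathcal G_{n,\Delta}$ contain an orientation of each edge (encoded at both $(u,e)$ and $(v,e)$ for $e=\{u,v\}$). Assume $\mathcal G_{n,\Delta}$ is $t$-independent for some positive integer $t$ and contains only graphs of girth at least $2t+2$. Then the following are equivalent: (1) There is a (port numbering model) algorithm solving $\Pi$ on $\mathcal G_{n,\Delta}$ in time $t$. (2) There is a (port numbering model) algorithm solving $\Pi'_1$ on $\mathcal G_{n,\Delta}$ in time $t-1$.
   Context: All graphs are simple, undirected and connected; $B(G)$ is the set of pairs $(v,e)$ with $v$ an endpoint of edge $e$. Multisets ignore order; $2^S$ is the power set. Input labels: a set $\Sigma$ with finite $\Sigma_{n,\Delta}\subseteq\Sigma$ for each $(n,\Delta)$; a $\Sigma$-input-labeled graph ($n$ nodes, max degree $\Delta$) carries $\varphi_G:B(G)\to\Sigma_{n,\Delta}$. Problems: $\Pi=(\mathcal O,f,g,h)$, $f(\Delta)\subseteq\mathcal O$ finite, $g(\Delta)$ a set of 2-element multisets over $f(\Delta)$, $h(\Delta)$ a set of multisets of at most $\Delta$ elements of $f(\Delta)$. An algorithm solves $\Pi$ on a class if on each graph of max degree $\Delta$ it outputs $o_{v,e}\in f(\Delta)$ at each $(v,e)\in B(G)$ with $\{o_{u,e},o_{v,e}\}\in g(\Delta)$ for every edge $\{u,v\}=e$ and the multiset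 of outputs at each node in $h(\Delta)$. Model: port numbering model; nodes know $n,\Delta$ and the input labels at their ports; synchronous rounds, unbounded messages/computation; a $t$-round algorithm maps each radius-$t$ neighborhood (topology, ports, inputs) of $v$ to one output per port. Neighborhoods: $N^t(v)$ = information $v$ gathers in $t$ rounds; $N^t(e)=N^t(u)\cap N^t(v)$; $\mathrm{ext}^t_e(v)=N^t(e)\setminus N^{t-1}(v)$; $\mathrm{ext}^t_v(e)=N^t(v)\setminus N^t(e)$. $t$-independence of $\mathcal G_{n,\Delta}$: for every $G\in\mathcal G_{n,\Delta}$, node $v$, edge $e=\{u,v\}$: (i) any extension of $N^t_G(e)$ along $v$ realized in some graph of the class and any extension along $u$ realized in some graph of the class are realized simultaneously around a single edge $e'$ of a single graph $H$ of the class with $N^t_H(e')\cong N^t_G(e)$; (ii) for any choice, for every edge $e'$ incident to $v$, of an extension of $N^{t-1}_G(v)$ along $e'$ realized in some graph of the class, all chosen extensions are realized simultaneously at a single node $w$ of a single graph $H$ of the class with $N^{t-1}_H(w)\cong N^{t-1}_G(v)$. Derived simplified problems: from $\Pi$ define $\Pi'_{1/2}$: $f_{1/2}(\Delta)=2^{f(\Delta)}$; $g'_{1/2}(\Delta)$ = all $\{Y,Z\}$ with $Y,Z\in f_{1/2}(\Delta)$ such that (P) $\{y,z\}\in g(\Delta)$ for all $y\in Y,z\in Z$, and $Y,Z$ are maximal with this property (for every $Y'\supsetneq Y$, $\{Y',Z\}$ fails (P), and for every $Z'\supsetneq Z$, $\{Y,Z'\}$ fails (P)); $h_{1/2}(\Delta)$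 = all $\{Y_1,\dots,Y_i\}$, $i\le\Delta$, such that some $y_j\in Y_j$ give $\{y_1,\dots,y_i\}\in h(\Delta)$. Then $\Pi'_1$: $f_1(\Delta)=2^{f_{1/2}(\Delta)}$; $g_1(\Delta)$ = all $\{Y,Z\}$ such that some $y\in Y,z\in Z$ give $\{y,z\}\in g'_{1/2}(\Delta)$; $h'_1(\Delta)$ = all $\{Y_1,\dots,Y_i\}$, $i\le\Delta$, such that (Q) $\{y_1,\dots,y_i\}\in h_{1/2}(\Delta)$ for all $y_j\in Y_j$, and the $Y_j$ are maximal with this property (for each $j$ and each $Y'_j\supsetneq Y_j$, replacing $Y_j$ by $Y'_j$ violates (Q)). *)

theory Defs
  imports Main "HOL-Library.Multiset"
begin

text \<open>Nodes are 0..<nv G; node v has ports 0..<deg G v; the half-edge set B(G) is the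
  set of ports. conn G p is the port at the other end of the edge leaving via p;
  inp G p is the input label at p.\<close>

record 'l pgraph =
  nv   :: nat
  deg  :: "nat \<Rightarrow> nat"
  conn :: "nat \<times> nat \<Rightarrow> nat \<times> nat"
  inp  :: "nat \<times> nat \<Rightarrow> 'l"

definition ports :: "'l pgraph \<Rightarrow> (nat \<times> nat) set" where
  "ports G = {(v,i). v < nv G \<and> i < deg G v}"

definition adj :: "'l pgraph \<Rightarrow> nat \<Rightarrow> nat \<Rightarrow> bool" where
  "adj G v u \<longleftrightarrow> (\<exists>i < deg G v. fst (conn G (v,i)) = u)"

definition simple_connected_pgraph :: "'l pgraph \<Rightarrow> bool" where
  "simple_connected_pgraph G \<longleftrightarrow>
     (\<forall>p\<in>ports G. conn G p \<in> ports G \<and> conn G (conn G p) = p \<and> fst (conn G p) \<noteq> fst p) \<and>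
     (\<forall>p\<in>ports G. \<forall>q\<in>ports G. fst p = fst q \<and> fst (conn G p) = fst (conn G q) \<longrightarrow> p = q) \<and>
     (\<forall>u < nv G. \<forall>v < nv G. (u,v) \<in> {(a,b). adj G a b}\<^sup>*)"

definition max_degree :: "'l pgraph \<Rightarrow> nat \<Rightarrow> bool" where
  "max_degree G \<Delta> \<longleftrightarrow> (\<forall>v < nv G. deg G v \<le> \<Delta>) \<and> (\<exists>v < nv G. deg G v = \<Delta>)"

definition is_cycle :: "'l pgraph \<Rightarrow> nat list \<Rightarrow> bool" where
  "is_cycle G vs \<longleftrightarrow> length vs \<ge> 3 \<and> distinct vs \<and> set vs \<subseteq> {..<nv G} \<and>
     (\<forall>k < length vs. adj G (vs ! k) (vs ! ((k + 1) mod length vs)))"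

definition girth_at_least :: "'l pgraph \<Rightarrow> nat \<Rightarrow> bool" where
  "girth_at_least G g \<longleftrightarrow> (\<forall>vs. is_cycle G vs \<longrightarrow> length vs \<ge> g)"

fun ball :: "'l pgraph \<Rightarrow> nat \<Rightarrow> nat \<Rightarrow> nat set" where
  "ball G 0 v = {v}"
| "ball G (Suc k) v = ball G k v \<union> {u. \<exists>w\<in>ball G k v. adj G w u}"

fun inner :: "'l pgraph \<Rightarrow> nat \<Rightarrow> nat \<Rightarrow> nat set" where
  "inner G 0 v = {}"
| "inner G (Suc k) v = ball G k v"

text \<open>N^t(v): the nodes at distance \<le> t (with their degrees and the input labels at all
  their ports), and the edges (given by their ports) having an endpoint at distance \<le> t-1.\<close>
definition nbE :: "'l pgraph \<Rightarrow> nat \<Rightarrow> nat \<Rightarrow> (nat \<times> nat) set" where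
  "nbE G t v = {p \<in> ports G. fst p \<in> inner G t v \<or> fst (conn G p) \<in> inner G t v}"

definition nbhd :: "'l pgraph \<Rightarrow> nat \<Rightarrow> nat \<Rightarrow> nat set \<times> (nat \<times> nat) set" where
  "nbhd G t v = (ball G t v, nbE G t v)"

definition enbhd :: "'l pgraph \<Rightarrow> nat \<Rightarrow> nat \<Rightarrow> nat \<Rightarrow> nat set \<times> (nat \<times> nat) set" where
  "enbhd G t v u = (ball G t v \<inter> ball G t u, nbE G t v \<inter> nbE G t u)"

definition nb_iso :: "'l pgraph \<Rightarrow> nat set \<times> (nat \<times> nat) set \<Rightarrow> 'l pgraph \<Rightarrow>
    nat set \<times> (nat \<times> nat) set \<Rightarrow> (nat \<Rightarrow> nat) \<Rightarrow> bool" where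
  "nb_iso G N H N' \<sigma> \<longleftrightarrow> bij_betw \<sigma> (fst N) (fst N') \<and>
     (\<forall>w\<in>fst N. deg H (\<sigma> w) = deg G w \<and>
        (\<forall>i < deg G w. inp H (\<sigma> w, i) = inp G (w, i) \<and>
           ((w,i) \<in> snd N \<longleftrightarrow> (\<sigma> w, i) \<in> snd N') \<and>
           ((w,i) \<in> snd N \<longrightarrow>
              conn H (\<sigma> w, i) = (\<sigma> (fst (conn G (w,i))), snd (conn G (w,i))))))"

definition nbhd_iso :: "nat \<Rightarrow> 'l pgraph \<Rightarrow> nat \<Rightarrow> 'l pgraph \<Rightarrow> nat \<Rightarrow> bool" where
  "nbhd_iso t G v H v' \<longleftrightarrow> (\<exists>\<sigma>. nb_iso G (nbhd G t v) H (nbhd H t v') \<sigma> \<and> \<sigma> v = v')"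

definition nbhd_iso2 :: "nat \<Rightarrow> 'l pgraph \<Rightarrow> nat \<Rightarrow> nat \<Rightarrow> 'l pgraph \<Rightarrow> nat \<Rightarrow> nat \<Rightarrow> bool" where
  "nbhd_iso2 t G v u H v' u' \<longleftrightarrow>
     (\<exists>\<sigma>. nb_iso G (nbhd G t v) H (nbhd H t v') \<sigma> \<and> \<sigma> v = v' \<and> \<sigma> u = u')"

definition enbhd_iso :: "nat \<Rightarrow> 'l pgraph \<Rightarrow> nat \<Rightarrow> nat \<Rightarrow> 'l pgraph \<Rightarrow> nat \<Rightarrow> nat \<Rightarrow> bool" where
  "enbhd_iso t G v u H v' u' \<longleftrightarrow>
     (\<exists>\<sigma>. nb_iso G (enbhd G t v u) H (enbhd H t v' u') \<sigma> \<and> \<sigma> v = v' \<and> \<sigma> u = u')"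

text \<open>Edges are addressed by a port p = (v,i) of one endpoint; the other endpoint is
  fst (conn G p).  (i): an extension of N^t(e) along v is N^t_{H1}(v1) for some H1 in the
  class with N^t_{H1}(e1) \<cong> N^t_G(e); similarly along u. (ii): an extension of
  N^{t-1}(v) along the edge at port k is N^t_{H_k}(e_k) for some H_k in the class with
  N^{t-1}_{H_k}(w_k) \<cong> N^{t-1}_G(v), e_k being the edge at port k of w_k.\<close>
definition t_independent :: "'l pgraph set \<Rightarrow> nat \<Rightarrow> bool" where
  "t_independent C t \<longleftrightarrow> (\<forall>G\<in>C. \<forall>p\<in>ports G.
     (let v = fst p; u = fst (conn G p) in
      (\<forall>H1\<in>C. \<forall>p1\<in>ports H1. \<forall>H2\<in>C. \<forall>p2\<in>ports H2.
         let v1 = fst p1; u1 = fst (conn H1 p1); v2 = fst p2; u2 = fst (conn H2 p2) in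
         enbhd_iso t H1 v1 u1 G v u \<longrightarrow> enbhd_iso t H2 v2 u2 G v u \<longrightarrow>
         (\<exists>H\<in>C. \<exists>q\<in>ports H. let v' = fst q; u' = fst (conn H q) in
            enbhd_iso t H v' u' G v u \<and>
            nbhd_iso2 t H v' u' H1 v1 u1 \<and> nbhd_iso2 t H u' v' H2 u2 v2))) \<and>
     (\<forall>Hs ws. (\<forall>k < deg G (fst p). Hs k \<in> C \<and> ws k < nv (Hs k) \<and>
                 nbhd_iso (t - 1) (Hs k) (ws k) G (fst p)) \<longrightarrow>
        (\<exists>H\<in>C. \<exists>w < nv H. nbhd_iso (t - 1) H w G (fst p) \<and>
           (\<forall>k < deg G (fst p).
              enbhd_iso t H w (fst (conn H (w,k))) (Hs k) (ws k) (fst (conn (Hs k) (ws k, k)))))))"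

record 'o problem =
  fP :: "nat \<Rightarrow> 'o set"
  gP :: "nat \<Rightarrow> 'o multiset set"
  hP :: "nat \<Rightarrow> 'o multiset set"

definition problem_wf :: "'o problem \<Rightarrow> bool" where
  "problem_wf P \<longleftrightarrow> (\<forall>\<Delta>. finite (fP P \<Delta>) \<and>
     (\<forall>M\<in>gP P \<Delta>. size M = 2 \<and> set_mset M \<subseteq> fP P \<Delta>) \<and>
     (\<forall>M\<in>hP P \<Delta>. size M \<le> \<Delta> \<and> set_mset M \<subseteq> fP P \<Delta>))"

definition all_g :: "'o problem \<Rightarrow> nat \<Rightarrow> 'o set \<Rightarrow> 'o set \<Rightarrow> bool" where
  "all_g P \<Delta> Y Z \<longleftrightarrow> (\<forall>y\<in>Y. \<forall>z\<in>Z. {#y, z#} \<in> gP P \<Delta>)"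

definition half_problem :: "'o problem \<Rightarrow> 'o set problem" where
  "half_problem P = \<lparr>
     fP = (\<lambda>\<Delta>. Pow (fP P \<Delta>)),
     gP = (\<lambda>\<Delta>. {{#Y, Z#} | Y Z. Y \<subseteq> fP P \<Delta> \<and> Z \<subseteq> fP P \<Delta> \<and> all_g P \<Delta> Y Z \<and>
              (\<forall>Y'. Y \<subset> Y' \<and> Y' \<subseteq> fP P \<Delta> \<longrightarrow> \<not> all_g P \<Delta> Y' Z) \<and>
              (\<forall>Z'. Z \<subset> Z' \<and> Z' \<subseteq> fP P \<Delta> \<longrightarrow> \<not> all_g P \<Delta> Y Z')}),
     hP = (\<lambda>\<Delta>. {mset Ys | Ys. length Ys \<le> \<Delta> \<and> set Ys \<subseteq> Pow (fP P \<Delta>) \<and>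
              (\<exists>ys. list_all2 (\<in>) ys Ys \<and> mset ys \<in> hP P \<Delta>)}) \<rparr>"

definition all_h :: "'o problem \<Rightarrow> nat \<Rightarrow> 'o set list \<Rightarrow> bool" where
  "all_h P \<Delta> Ys \<longleftrightarrow> (\<forall>ys. list_all2 (\<in>) ys Ys \<longrightarrow> mset ys \<in> hP P \<Delta>)"

definition one_problem :: "'o problem \<Rightarrow> 'o set set problem" where
  "one_problem P = (let Q = half_problem P in \<lparr>
     fP = (\<lambda>\<Delta>. Pow (fP Q \<Delta>)),
     gP = (\<lambda>\<Delta>. {{#Y, Z#} | Y Z. Y \<subseteq> fP Q \<Delta> \<and> Z \<subseteq> fP Q \<Delta> \<and>
              (\<exists>y\<in>Y. \<exists>z\<in>Z. {#y, z#} \<in> gP Q \<Delta>)}),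
     hP = (\<lambda>\<Delta>. {mset Ys | Ys. length Ys \<le> \<Delta> \<and> set Ys \<subseteq> Pow (fP Q \<Delta>) \<and> all_h Q \<Delta> Ys \<and>
              (\<forall>j < length Ys. \<forall>Y'. Ys ! j \<subset> Y' \<and> Y' \<subseteq> fP Q \<Delta> \<longrightarrow>
                  \<not> all_h Q \<Delta> (Ys[j := Y']))}) \<rparr>)"

text \<open>A t-round algorithm on class C: output at port i of v (in graph G) is a function of
  the isomorphism type of N^t_G(v) (n and \<Delta> are fixed for the class).\<close>
definition t_round_alg :: "'l pgraph set \<Rightarrow> nat \<Rightarrow> ('l pgraph \<Rightarrow> nat \<Rightarrow> nat \<Rightarrow> 'o) \<Rightarrow> bool" where
  "t_round_alg C t A \<longleftrightarrow> (\<forall>G\<in>C. \<forall>H\<in>C. \<forall>v < nv G. \<forall>v' < nv H.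
      nbhd_iso t G v H v' \<longrightarrow> (\<forall>i < deg G v. A G v i = A H v' i))"

definition solves :: "'l pgraph set \<Rightarrow> nat \<Rightarrow> 'o problem \<Rightarrow> ('l pgraph \<Rightarrow> nat \<Rightarrow> nat \<Rightarrow> 'o) \<Rightarrow> bool" where
  "solves C \<Delta> P A \<longleftrightarrow> (\<forall>G\<in>C. \<forall>v < nv G.
      (\<forall>i < deg G v. A G v i \<in> fP P \<Delta> \<and>
         {#A G v i, A G (fst (conn G (v,i))) (snd (conn G (v,i)))#} \<in> gP P \<Delta>) \<and>
      mset (map (A G v) [0..<deg G v]) \<in> hP P \<Delta>)"

end

theory Submission
  imports Defs "HOL-Library.Product_Order"
begin

(* From a t-round algorithm A for Pi: for an edge {v, u}, collect the outputs that A can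
   produce at the v-end of any edge of the class with the same radius-t edge neighbourhood.
   The first half of t-independence realises any two such outputs, one from each end, around
   a single edge, so the two collections satisfy (P); enlarging them to a maximal pair gives a
   g'_{1/2} edge. The second half realises any choice of these half-edge labels, one per port,
   around a single node with the radius-(t-1) neighbourhood of v; hence the sets of labels that
   are possible at the ports of v satisfy (Q), and enlarging every entry to a maximal one gives
   an h'_1 configuration. These sets depend only on the radius-(t-1) neighbourhood of v.

   From a (t-1)-round algorithm for Pi'_1: one more round shows a node the labels at both ends
   of its edges. Along each edge it picks a g'_{1/2} pair inside the two labels (the edge
   orientation tells both endpoints which component is theirs, so they agree), and then a
   Pi configuration inside the resulting h'_{1/2} configuration. *)

section \<open>Isomorphisms of neighbourhoods\<close>

definition nb_closed :: "'l pgraph \<Rightarrow> nat set \<times> (nat \<times> nat) set \<Rightarrow> bool" where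
  "nb_closed G N \<longleftrightarrow> (\<forall>w\<in>fst N. \<forall>i<deg G w. (w, i) \<in> snd N \<longrightarrow> fst (conn G (w, i)) \<in> fst N)"

lemma nb_iso_bij: "nb_iso G N H N' \<sigma> \<Longrightarrow> bij_betw \<sigma> (fst N) (fst N')"
  unfolding nb_iso_def by blast

lemma nb_iso_deg: "nb_iso G N H N' \<sigma> \<Longrightarrow> w \<in> fst N \<Longrightarrow> deg H (\<sigma> w) = deg G w"
  unfolding nb_iso_def by blast

lemma nb_isoD:
  assumes "nb_iso G N H N' \<sigma>" "w \<in> fst N" "i < deg G w"
  shows "inp H (\<sigma> w, i) = inp G (w, i)"
    and "(\<sigma> w, i) \<in> snd N' \<longleftrightarrow> (w, i) \<in> snd N"
    and "(w, i) \<in> snd N \<Longrightarrow> conn H (\<sigma> w, i) = (\<sigma> (fst (conn G (w, i))), snd (conn G (w, i)))"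
  using assms unfolding nb_iso_def by blast+

lemma nb_iso_refl: "nb_iso G N G N id"
  unfolding nb_iso_def by auto

lemma nb_iso_sym:
  assumes iso: "nb_iso G N H N' \<sigma>" and closed: "nb_closed G N"
  shows "nb_iso H N' G N (inv_into (fst N) \<sigma>)"
proof -
  let ?\<tau> = "inv_into (fst N) \<sigma>"
  have bij: "bij_betw \<sigma> (fst N) (fst N')" using nb_iso_bij[OF iso] .
  have \<tau>\<sigma>: "?\<tau> (\<sigma> w) = w" if "w \<in> fst N" for w
    using bij that by (simp add: bij_betw_def)
  have conn_back: "conn G (w, i) = (?\<tau> (fst (conn H (\<sigma> w, i))), snd (conn H (\<sigma> w, i)))"
    if "w \<in> fst N" "i < deg G w" "(w, i) \<in> snd N" for w i
    using nb_isoD(3)[OF iso that] \<tau>\<sigma> closed that unfolding nb_closed_def by auto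
  have "fst N' = \<sigma> ` fst N" using bij by (simp add: bij_betw_def)
  then show ?thesis
    unfolding nb_iso_def
    using bij_betw_inv_into[OF bij] nb_iso_deg[OF iso] nb_isoD[OF iso] conn_back
    by (auto simp: \<tau>\<sigma>)
qed

lemma nb_iso_trans:
  assumes "nb_iso G N H N' \<sigma>" and "nb_iso H N' K N'' \<tau>"
  shows "nb_iso G N K N'' (\<tau> \<circ> \<sigma>)"
proof -
  have "\<sigma> w \<in> fst N'" if "w \<in> fst N" for w
    using nb_iso_bij[OF assms(1)] that by (auto simp: bij_betw_def)
  with assms show ?thesis
    unfolding nb_iso_def by (auto intro: bij_betw_trans)
qed

lemma in_ball: "v \<in> ball G k v"
  by (induction k) auto

lemma ball_mono: "k \<le> m \<Longrightarrow> ball G k v \<subseteq> ball G m v"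
  by (induction m) (auto simp: le_Suc_eq)

lemma adj_conn: "i < deg G w \<Longrightarrow> adj G w (fst (conn G (w, i)))"
  unfolding adj_def by blast

lemma ball_Suc_conn: "w \<in> ball G k v \<Longrightarrow> i < deg G w \<Longrightarrow> fst (conn G (w, i)) \<in> ball G (Suc k) v"
  using adj_conn by auto

lemma ball_triangle: "w \<in> ball G s v \<Longrightarrow> ball G r w \<subseteq> ball G (s + r) v"
  by (induction r) auto

lemma nbE_conn_in_ball: "p \<in> nbE G t v \<Longrightarrow> fst (conn G p) \<in> ball G t v"
  by (cases t) (auto simp: nbE_def ports_def intro: adj_conn)

lemma nb_closed_nbhd: "nb_closed G (nbhd G t v)"
  unfolding nb_closed_def nbhd_def using nbE_conn_in_ball by fastforce

lemma nb_closed_enbhd: "nb_closed G (enbhd G t v u)"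
  unfolding nb_closed_def enbhd_def using nbE_conn_in_ball by fastforce

lemma mem_ports_iff: "(x, i) \<in> ports G \<longleftrightarrow> x < nv G \<and> i < deg G x"
  unfolding ports_def by auto

context
  fixes G :: "'l pgraph"
  assumes simple: "simple_connected_pgraph G"
begin

lemma conn_in_ports: "p \<in> ports G \<Longrightarrow> conn G p \<in> ports G"
  using simple unfolding simple_connected_pgraph_def by blast

lemma conn_conn: "p \<in> ports G \<Longrightarrow> conn G (conn G p) = p"
  using simple unfolding simple_connected_pgraph_def by blast

lemma ports_eqI:
  "p \<in> ports G \<Longrightarrow> q \<in> ports G \<Longrightarrow> fst p = fst q \<Longrightarrow> fst (conn G p) = fst (conn G q) \<Longrightarrow> p = q"
  using simple unfolding simple_connected_pgraph_def by blast

lemma conn_node_less: "v < nv G \<Longrightarrow> i < deg G v \<Longrightarrow> fst (conn G (v, i)) < nv G"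
  using conn_in_ports[of "(v, i)"] by (auto simp: ports_def)

lemma adj_sym: "w < nv G \<Longrightarrow> adj G w u \<Longrightarrow> adj G u w"
  unfolding adj_def
  by (metis conn_conn conn_in_ports fst_conv mem_ports_iff prod.collapse)

lemma ball_subset_nodes: "v < nv G \<Longrightarrow> ball G k v \<subseteq> {..<nv G}"
  by (induction k) (auto simp: adj_def intro: conn_node_less)

end

lemma inner_subset_ball: "inner G t v \<subseteq> ball G t v"
  by (cases t) auto

lemma centre_in_inner: "0 < t \<Longrightarrow> v \<in> inner G t v"
  by (cases t) (auto simp: in_ball)

lemma ball_subset_inner: "w \<in> ball G s v \<Longrightarrow> s + r < t \<Longrightarrow> ball G r w \<subseteq> inner G t v"
  using ball_triangle[of w G s v r] ball_mono[of "s + r" "t - 1" G v] by (cases t) auto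

lemma ball_subset_ball: "w \<in> ball G s v \<Longrightarrow> s + r \<le> t \<Longrightarrow> ball G r w \<subseteq> ball G t v"
  using ball_triangle[of w G s v r] ball_mono[of "s + r" t G v] by auto

lemma inner_subset_inner: "w \<in> ball G s v \<Longrightarrow> s + r \<le> t \<Longrightarrow> inner G r w \<subseteq> inner G t v"
  using ball_subset_inner[of w G s v] by (cases r) auto

lemma nbE_mono: "inner G r w \<subseteq> inner G t v \<Longrightarrow> nbE G r w \<subseteq> nbE G t v"
  unfolding nbE_def by auto

locale ball_iso =
  fixes G H :: "'l pgraph" and t v v' :: nat and \<sigma> :: "nat \<Rightarrow> nat"
  assumes simple_G: "simple_connected_pgraph G" and simple_H: "simple_connected_pgraph H"
    and v: "v < nv G" and v': "v' < nv H"
    and iso: "nb_iso G (nbhd G t v) H (nbhd H t v') \<sigma>" and centre: "\<sigma> v = v'"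
begin

lemma bij: "bij_betw \<sigma> (ball G t v) (ball H t v')"
  using nb_iso_bij[OF iso] by (simp add: nbhd_def)

lemma deg_eq: "x \<in> ball G t v \<Longrightarrow> deg H (\<sigma> x) = deg G x"
  using nb_iso_deg[OF iso] by (simp add: nbhd_def)

lemma inp_eq: "x \<in> ball G t v \<Longrightarrow> i < deg G x \<Longrightarrow> inp H (\<sigma> x, i) = inp G (x, i)"
  using nb_isoD(1)[OF iso] by (simp add: nbhd_def)

lemma conn_eq:
  "x \<in> ball G t v \<Longrightarrow> (x, i) \<in> nbE G t v \<Longrightarrow>
     conn H (\<sigma> x, i) = (\<sigma> (fst (conn G (x, i))), snd (conn G (x, i)))"
  using nb_isoD(3)[OF iso, of x i] by (simp add: nbhd_def nbE_def ports_def)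

lemma image_node_less: "x \<in> ball G t v \<Longrightarrow> \<sigma> x < nv H"
  using bij ball_subset_nodes[OF simple_H v'] by (auto simp: bij_betw_def)

lemma conn_eq_inner:
  "x \<in> inner G t v \<Longrightarrow> i < deg G x \<Longrightarrow>
     conn H (\<sigma> x, i) = (\<sigma> (fst (conn G (x, i))), snd (conn G (x, i)))"
  using conn_eq inner_subset_ball ball_subset_nodes[OF simple_G v]
  by (fastforce simp: nbE_def mem_ports_iff)

(* The port (x, i) need not be recorded in nbE G t v, but the reverse port at the inner
   node y is. *)
lemma conn_eq_rev:
  assumes x: "x \<in> ball G t v" and i: "i < deg G x" and y: "y \<in> inner G t v"
    and xy: "fst (conn H (\<sigma> x, i)) = \<sigma> y"
  shows "fst (conn G (x, i)) = y"
proof -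
  define j where "j = snd (conn H (\<sigma> x, i))"
  have port_x: "(\<sigma> x, i) \<in> ports H"
    using image_node_less[OF x] deg_eq[OF x] i by (simp add: mem_ports_iff)
  have "conn H (\<sigma> x, i) = (\<sigma> y, j)" using xy by (simp add: j_def prod_eq_iff)
  then have port_y: "(\<sigma> y, j) \<in> ports H" and conn_back: "conn H (\<sigma> y, j) = (\<sigma> x, i)"
    using conn_in_ports[OF simple_H port_x] conn_conn[OF simple_H port_x] by auto
  have y_ball: "y \<in> ball G t v" using y inner_subset_ball by blast
  then have j: "j < deg G y" using port_y deg_eq by (simp add: mem_ports_iff)
  have y_node: "y < nv G" using y_ball ball_subset_nodes[OF simple_G v] by blast
  have "(y, j) \<in> nbE G t v" using y y_node j by (simp add: nbE_def mem_ports_iff)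
  then have "fst (conn G (y, j)) \<in> ball G t v" by (rule nbE_conn_in_ball)
  moreover have "\<sigma> (fst (conn G (y, j))) = \<sigma> x" "snd (conn G (y, j)) = i"
    using conn_eq_inner[OF y j] conn_back by auto
  ultimately have "conn G (y, j) = (x, i)"
    using bij x by (auto simp: bij_betw_def inj_on_def prod_eq_iff)
  then show ?thesis
    using conn_conn[OF simple_G, of "(y, j)"] y_node j by (auto simp: mem_ports_iff)
qed

lemma adj_image:
  assumes "z \<in> inner G t v"
  shows "adj H (\<sigma> z) u' \<longleftrightarrow> (\<exists>u. adj G z u \<and> u' = \<sigma> u)"
  using conn_eq_inner[OF assms] deg_eq[OF subsetD[OF inner_subset_ball assms]]
  unfolding adj_def by auto

lemma image_ball: "w \<in> ball G s v \<Longrightarrow> s + r \<le> t \<Longrightarrow> \<sigma> ` ball G r w = ball H r (\<sigma> w)"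
proof (induction r)
  case 0
  then show ?case by simp
next
  case (Suc r)
  have inner: "ball G r w \<subseteq> inner G t v"
    using ball_subset_inner[OF Suc.prems(1)] Suc.prems(2) by simp
  have IH: "\<sigma> ` ball G r w = ball H r (\<sigma> w)" using Suc by simp
  have "\<sigma> ` {u. \<exists>z\<in>ball G r w. adj G z u} = {u'. \<exists>z\<in>ball G r w. adj H (\<sigma> z) u'}"
    using adj_image inner by blast
  also have "\<dots> = {u'. \<exists>z'\<in>ball H r (\<sigma> w). adj H z' u'}"
    unfolding IH[symmetric] by blast
  finally show ?case using IH by (simp add: image_Un)
qed

lemma nbE_iff:
  assumes w: "w \<in> ball G s v" and rs: "s + r \<le> t" and x: "x \<in> ball G r w" and i: "i < deg G x"
  shows "(\<sigma> x, i) \<in> nbE H r (\<sigma> w) \<longleftrightarrow> (x, i) \<in> nbE G r w"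
proof (cases r)
  case 0
  then show ?thesis by (simp add: nbE_def)
next
  case (Suc r')
  have x_ball: "x \<in> ball G t v" using ball_subset_ball[OF w rs] x by blast
  have inner: "ball G r' w \<subseteq> inner G t v"
    using ball_subset_inner[OF w] rs Suc by simp
  have image: "\<sigma> ` ball G r' w = ball H r' (\<sigma> w)"
    using image_ball[OF w] rs Suc by simp
  have ports: "(x, i) \<in> ports G" "(\<sigma> x, i) \<in> ports H"
    using x_ball ball_subset_nodes[OF simple_G v] image_node_less[OF x_ball] deg_eq[OF x_ball] i
    by (auto simp: mem_ports_iff)
  have inj: "inj_on \<sigma> (ball G t v)" using bij by (simp add: bij_betw_def)
  have "ball G r' w \<subseteq> ball G t v" using inner inner_subset_ball by blast
  then have node: "\<sigma> x \<in> ball H r' (\<sigma> w) \<longleftrightarrow> x \<in> ball G r' w"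
    unfolding image[symmetric] by (rule inj_on_image_mem_iff[OF inj x_ball])
  have "fst (conn H (\<sigma> x, i)) \<in> ball H r' (\<sigma> w) \<longleftrightarrow> fst (conn G (x, i)) \<in> ball G r' w"
  proof
    assume "fst (conn H (\<sigma> x, i)) \<in> ball H r' (\<sigma> w)"
    then obtain y where "y \<in> ball G r' w" "fst (conn H (\<sigma> x, i)) = \<sigma> y"
      using image by auto
    then show "fst (conn G (x, i)) \<in> ball G r' w"
      using conn_eq_rev[OF x_ball i] inner by auto
  next
    assume "fst (conn G (x, i)) \<in> ball G r' w"
    then have "(x, i) \<in> nbE G t v" using ports(1) inner by (auto simp: nbE_def)
    with \<open>fst (conn G (x, i)) \<in> ball G r' w\<close> show "fst (conn H (\<sigma> x, i)) \<in> ball H r' (\<sigma> w)"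
      using conn_eq[OF x_ball] image by auto
  qed
  with ports node Suc show ?thesis by (simp add: nbE_def)
qed

lemma nb_iso_restrict:
  assumes w: "w \<in> ball G s v" and rs: "s + r \<le> t"
  shows "nb_iso G (nbhd G r w) H (nbhd H r (\<sigma> w)) \<sigma>"
proof -
  have sub: "ball G r w \<subseteq> ball G t v" by (rule ball_subset_ball[OF w rs])
  have "nbE G r w \<subseteq> nbE G t v" by (rule nbE_mono[OF inner_subset_inner[OF w rs]])
  then have "conn H (\<sigma> x, i) = (\<sigma> (fst (conn G (x, i))), snd (conn G (x, i)))"
    if "x \<in> ball G r w" "(x, i) \<in> nbE G r w" for x i
    using conn_eq sub that by blast
  moreover have "bij_betw \<sigma> (ball G r w) (ball H r (\<sigma> w))"
    using image_ball[OF w rs] sub bij by (auto simp: bij_betw_def intro: inj_on_subset)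
  ultimately show ?thesis
    unfolding nb_iso_def nbhd_def
    using sub deg_eq inp_eq nbE_iff[OF w rs] by auto
qed

end

lemma nbhd_iso_restrict:
  assumes "simple_connected_pgraph G" "simple_connected_pgraph H" "v < nv G" "v' < nv H"
    and "nbhd_iso t G v H v'" and "r \<le> t"
  shows "nbhd_iso r G v H v'"
proof -
  obtain \<sigma> where "nb_iso G (nbhd G t v) H (nbhd H t v') \<sigma>" "\<sigma> v = v'"
    using assms(5) unfolding nbhd_iso_def by blast
  then interpret ball_iso G H t v v' \<sigma> using assms by unfold_locales
  show ?thesis
    unfolding nbhd_iso_def using nb_iso_restrict[of v 0 r] assms(6) centre by (auto simp: in_ball)
qed

lemma nbhd_iso_conn:
  assumes "simple_connected_pgraph G" "simple_connected_pgraph H" "v < nv G" "v' < nv H"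
    and "nbhd_iso t G v H v'" and "0 < t" and "i < deg G v"
  obtains u' where "conn H (v', i) = (u', snd (conn G (v, i)))"
    and "nbhd_iso (t - 1) G (fst (conn G (v, i))) H u'"
proof -
  obtain \<sigma> where "nb_iso G (nbhd G t v) H (nbhd H t v') \<sigma>" "\<sigma> v = v'"
    using assms(5) unfolding nbhd_iso_def by blast
  then interpret ball_iso G H t v v' \<sigma> using assms by unfold_locales
  let ?u = "fst (conn G (v, i))"
  have "?u \<in> ball G (Suc 0) v" using ball_Suc_conn[OF in_ball assms(7)] .
  then have "nbhd_iso (t - 1) G ?u H (\<sigma> ?u)"
    unfolding nbhd_iso_def using nb_iso_restrict[of ?u "Suc 0" "t - 1"] assms(6) by auto
  moreover have "conn H (v', i) = (\<sigma> ?u, snd (conn G (v, i)))"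
    using conn_eq_inner[OF centre_in_inner[OF assms(6)] assms(7)] centre by simp
  ultimately show ?thesis using that by blast
qed

lemma nbhd_iso_refl: "nbhd_iso t G v G v"
  unfolding nbhd_iso_def using nb_iso_refl by fastforce

lemma nbhd_iso_sym:
  assumes "nbhd_iso t G v H v'"
  shows "nbhd_iso t H v' G v"
proof -
  obtain \<sigma> where \<sigma>: "nb_iso G (nbhd G t v) H (nbhd H t v') \<sigma>" "\<sigma> v = v'"
    using assms unfolding nbhd_iso_def by blast
  have "inv_into (fst (nbhd G t v)) \<sigma> v' = v"
    using nb_iso_bij[OF \<sigma>(1)] \<sigma>(2) in_ball[of v G t] by (auto simp: bij_betw_def nbhd_def)
  then show ?thesis
    unfolding nbhd_iso_def using nb_iso_sym[OF \<sigma>(1) nb_closed_nbhd] by blast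
qed

lemma nbhd_iso_trans: "nbhd_iso t G v H v' \<Longrightarrow> nbhd_iso t H v' K v'' \<Longrightarrow> nbhd_iso t G v K v''"
  unfolding nbhd_iso_def using nb_iso_trans by fastforce

lemma nbhd_iso2_imp_nbhd_iso: "nbhd_iso2 t G v u H v' u' \<Longrightarrow> nbhd_iso t G v H v'"
  unfolding nbhd_iso2_def nbhd_iso_def by blast

lemma nbhd_iso_deg: "nbhd_iso t G v H v' \<Longrightarrow> deg H v' = deg G v"
  unfolding nbhd_iso_def nb_iso_def nbhd_def using in_ball[of v G t] by auto

lemma nbhd_iso_inp: "nbhd_iso t G v H v' \<Longrightarrow> i < deg G v \<Longrightarrow> inp H (v', i) = inp G (v, i)"
  unfolding nbhd_iso_def nb_iso_def nbhd_def using in_ball[of v G t] by auto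

lemma nbhd_iso2_conn:
  assumes "nbhd_iso2 t G v u H v' u'" "0 < t" "v < nv G" "i < deg G v" "fst (conn G (v, i)) = u"
  shows "i < deg H v'" and "fst (conn H (v', i)) = u'"
proof -
  obtain \<sigma> where \<sigma>: "nb_iso G (nbhd G t v) H (nbhd H t v') \<sigma>" "\<sigma> v = v'" "\<sigma> u = u'"
    using assms(1) unfolding nbhd_iso2_def by blast
  have "(v, i) \<in> nbE G t v"
    using assms(2-4) by (simp add: nbE_def mem_ports_iff centre_in_inner)
  then show "i < deg H v'" "fst (conn H (v', i)) = u'"
    using \<sigma> assms(4,5) in_ball[of v G t] unfolding nb_iso_def nbhd_def by auto
qed

lemma enbhd_iso_refl: "enbhd_iso t G v u G v u"
  unfolding enbhd_iso_def using nb_iso_refl by fastforce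

lemma enbhd_iso_swap: "enbhd_iso t G v u H v' u' \<longleftrightarrow> enbhd_iso t G u v H u' v'"
  unfolding enbhd_iso_def enbhd_def by (simp add: Int_commute conj_commute)

lemma ends_in_enbhd: "0 < t \<Longrightarrow> adj G u v \<Longrightarrow> v \<in> fst (enbhd G t v u)"
  by (cases t) (auto simp: enbhd_def in_ball)

lemma enbhd_iso_sym:
  assumes "enbhd_iso t G v u H v' u'" "0 < t" "adj G v u" "adj G u v"
  shows "enbhd_iso t H v' u' G v u"
proof -
  obtain \<sigma> where \<sigma>: "nb_iso G (enbhd G t v u) H (enbhd H t v' u') \<sigma>" "\<sigma> v = v'" "\<sigma> u = u'"
    using assms(1) unfolding enbhd_iso_def by blast
  have "v \<in> fst (enbhd G t v u)" "u \<in> fst (enbhd G t v u)"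
    using ends_in_enbhd[OF assms(2,4)] ends_in_enbhd[OF assms(2,3)] by (auto simp: enbhd_def)
  then have "inv_into (fst (enbhd G t v u)) \<sigma> v' = v" "inv_into (fst (enbhd G t v u)) \<sigma> u' = u"
    using nb_iso_bij[OF \<sigma>(1)] \<sigma>(2,3) by (auto simp: bij_betw_def)
  then show ?thesis
    unfolding enbhd_iso_def using nb_iso_sym[OF \<sigma>(1) nb_closed_enbhd] by blast
qed

lemma enbhd_iso_trans:
  "enbhd_iso t G v u H v' u' \<Longrightarrow> enbhd_iso t H v' u' K v'' u'' \<Longrightarrow> enbhd_iso t G v u K v'' u''"
  unfolding enbhd_iso_def using nb_iso_trans by fastforce

lemma enbhd_iso_deg_inp:
  assumes "enbhd_iso t G v u H v' u'" "0 < t" "adj G u v"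
  shows "deg H v' = deg G v" and "i < deg G v \<Longrightarrow> inp H (v', i) = inp G (v, i)"
proof -
  obtain \<sigma> where \<sigma>: "nb_iso G (enbhd G t v u) H (enbhd H t v' u') \<sigma>" "\<sigma> v = v'"
    using assms(1) unfolding enbhd_iso_def by blast
  show "deg H v' = deg G v" "i < deg G v \<Longrightarrow> inp H (v', i) = inp G (v, i)"
    using nb_iso_deg[OF \<sigma>(1)] nb_isoD(1)[OF \<sigma>(1)] \<sigma>(2) ends_in_enbhd[OF assms(2,3)] by auto
qed

lemma t_independentD_edge:
  assumes "t_independent C t" "G \<in> C" "(v, k) \<in> ports G"
    and "H1 \<in> C" "p1 \<in> ports H1" "enbhd_iso t H1 (fst p1) (fst (conn H1 p1)) G v (fst (conn G (v, k)))"
    and "H2 \<in> C" "p2 \<in> ports H2" "enbhd_iso t H2 (fst p2) (fst (conn H2 p2)) G v (fst (conn G (v, k)))"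
  obtains H q where "H \<in> C" "q \<in> ports H"
    and "nbhd_iso2 t H (fst q) (fst (conn H q)) H1 (fst p1) (fst (conn H1 p1))"
    and "nbhd_iso2 t H (fst (conn H q)) (fst q) H2 (fst (conn H2 p2)) (fst p2)"
proof -
  from bspec[OF bspec[OF assms(1)[unfolded t_independent_def Let_def] assms(2)] assms(3)]
  have "\<exists>H\<in>C. \<exists>q\<in>ports H. nbhd_iso2 t H (fst q) (fst (conn H q)) H1 (fst p1) (fst (conn H1 p1)) \<and>
      nbhd_iso2 t H (fst (conn H q)) (fst q) H2 (fst (conn H2 p2)) (fst p2)"
    using assms(4-9) unfolding fst_conv by blast
  with that show ?thesis by blast
qed

lemma t_independentD_node:
  assumes "t_independent C t" "G \<in> C" "v < nv G" "0 < deg G v"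
    and "\<forall>k < deg G v. Hs k \<in> C \<and> ws k < nv (Hs k) \<and> nbhd_iso (t - 1) (Hs k) (ws k) G v"
  obtains H w where "H \<in> C" "w < nv H" "nbhd_iso (t - 1) H w G v"
    and "\<forall>k < deg G v. enbhd_iso t H w (fst (conn H (w, k))) (Hs k) (ws k) (fst (conn (Hs k) (ws k, k)))"
proof -
  have "(v, 0) \<in> ports G" using assms(3,4) by (simp add: mem_ports_iff)
  from bspec[OF bspec[OF assms(1)[unfolded t_independent_def Let_def] assms(2)] this]
  have "\<exists>H\<in>C. \<exists>w < nv H. nbhd_iso (t - 1) H w G v \<and>
      (\<forall>k < deg G v. enbhd_iso t H w (fst (conn H (w, k))) (Hs k) (ws k) (fst (conn (Hs k) (ws k, k))))"
    using assms(5) unfolding fst_conv by blast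
  with that show ?thesis by blast
qed

section \<open>The derived problems\<close>

lemma doubleton_mset_eq_iff: "{#a, b#} = {#c, d#} \<longleftrightarrow> (a = c \<and> b = d) \<or> (a = d \<and> b = c)"
  by (auto simp: add_eq_conv_diff add_mset_commute)

lemma all_g_commute: "all_g P \<Delta> Y Z \<longleftrightarrow> all_g P \<Delta> Z Y"
  unfolding all_g_def by (metis add_mset_commute)

lemma doubleton_mem_iff:
  assumes "\<And>x y. R x y \<Longrightarrow> R y x"
  shows "{#a, b#} \<in> {{#x, y#} | x y. R x y} \<longleftrightarrow> R a b"
  using assms by (auto simp: doubleton_mset_eq_iff)

lemma fP_half_problem [simp]: "fP (half_problem P) \<Delta> = Pow (fP P \<Delta>)"
  by (simp add: half_problem_def)

lemma fP_one_problem [simp]: "fP (one_problem P) \<Delta> = Pow (Pow (fP P \<Delta>))"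
  by (simp add: one_problem_def Let_def)

lemma half_edge_iff:
  "{#Y, Z#} \<in> gP (half_problem P) \<Delta> \<longleftrightarrow>
     Y \<subseteq> fP P \<Delta> \<and> Z \<subseteq> fP P \<Delta> \<and> all_g P \<Delta> Y Z \<and>
     (\<forall>Y'. Y \<subset> Y' \<and> Y' \<subseteq> fP P \<Delta> \<longrightarrow> \<not> all_g P \<Delta> Y' Z) \<and>
     (\<forall>Z'. Z \<subset> Z' \<and> Z' \<subseteq> fP P \<Delta> \<longrightarrow> \<not> all_g P \<Delta> Y Z')"
  unfolding half_problem_def problem.select_convs
  by (rule doubleton_mem_iff) (auto simp: all_g_commute)

lemma half_edgeI:
  "Y \<subseteq> fP P \<Delta> \<Longrightarrow> Z \<subseteq> fP P \<Delta> \<Longrightarrow> all_g P \<Delta> Y Z \<Longrightarrow>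
     \<forall>Y'. Y \<subset> Y' \<and> Y' \<subseteq> fP P \<Delta> \<longrightarrow> \<not> all_g P \<Delta> Y' Z \<Longrightarrow>
     \<forall>Z'. Z \<subset> Z' \<and> Z' \<subseteq> fP P \<Delta> \<longrightarrow> \<not> all_g P \<Delta> Y Z' \<Longrightarrow> {#Y, Z#} \<in> gP (half_problem P) \<Delta>"
  by (simp add: half_edge_iff)

lemma one_edge_iff:
  "{#X, Z#} \<in> gP (one_problem P) \<Delta> \<longleftrightarrow>
     X \<subseteq> Pow (fP P \<Delta>) \<and> Z \<subseteq> Pow (fP P \<Delta>) \<and> (\<exists>y\<in>X. \<exists>z\<in>Z. {#y, z#} \<in> gP (half_problem P) \<Delta>)"
  unfolding one_problem_def Let_def problem.select_convs fP_half_problem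
  by (rule doubleton_mem_iff) (metis add_mset_commute)

lemma list_all2_mset_reorder:
  assumes "list_all2 R xs ys" and "mset ys' = mset ys"
  obtains xs' where "list_all2 R xs' ys'" and "mset xs' = mset xs"
proof -
  have "list_all2 (\<lambda>y x. R x y) ys xs" using assms(1) by (simp add: list_all2_conv_all_nth)
  then obtain xs' where "list_all2 (\<lambda>y x. R x y) ys' xs'" "mset xs' = mset xs"
    using list_all2_reorder_left_invariance[OF _ assms(2)] by blast
  then show ?thesis by (intro that[of xs']) (auto simp: list_all2_conv_all_nth)
qed

lemma all_h_mset_cong:
  assumes "mset Xs = mset Ys" and "all_h Q \<Delta> Ys"
  shows "all_h Q \<Delta> Xs"
  unfolding all_h_def
proof (intro allI impI)
  fix xs assume "list_all2 (\<in>) xs Xs"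
  then obtain ys where ys: "list_all2 (\<in>) ys Ys" "mset ys = mset xs"
    using list_all2_mset_reorder[OF _ assms(1)[symmetric]] by blast
  have "mset ys \<in> hP Q \<Delta>" using assms(2) ys(1) unfolding all_h_def by blast
  with ys(2) show "mset xs \<in> hP Q \<Delta>" by simp
qed

lemma half_nodeI:
  "length Ys \<le> \<Delta> \<Longrightarrow> set Ys \<subseteq> Pow (fP P \<Delta>) \<Longrightarrow> list_all2 (\<in>) ys Ys \<Longrightarrow> mset ys \<in> hP P \<Delta> \<Longrightarrow>
     mset Ys \<in> hP (half_problem P) \<Delta>"
  unfolding half_problem_def by auto

lemma half_nodeE:
  assumes "mset Ys \<in> hP (half_problem P) \<Delta>"
  obtains ys where "list_all2 (\<in>) ys Ys" and "mset ys \<in> hP P \<Delta>"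
proof -
  obtain Ys' ys where "mset Ys = mset Ys'" "list_all2 (\<in>) ys Ys'" "mset ys \<in> hP P \<Delta>"
    using assms unfolding half_problem_def by auto
  then obtain ys' where "list_all2 (\<in>) ys' Ys" "mset ys' = mset ys"
    using list_all2_mset_reorder[of "(\<in>)" ys Ys' Ys] by blast
  with \<open>mset ys \<in> hP P \<Delta>\<close> show ?thesis using that by simp
qed

lemma one_node_all_h: "mset Ys \<in> hP (one_problem P) \<Delta> \<Longrightarrow> all_h (half_problem P) \<Delta> Ys"
  unfolding one_problem_def Let_def by (auto intro: all_h_mset_cong)

lemma one_node_labels: "mset Ys \<in> hP (one_problem P) \<Delta> \<Longrightarrow> set Ys \<subseteq> Pow (Pow (fP P \<Delta>))"
proof -
  assume "mset Ys \<in> hP (one_problem P) \<Delta>"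
  then obtain Ys' where "mset Ys = mset Ys'" "set Ys' \<subseteq> Pow (Pow (fP P \<Delta>))"
    unfolding one_problem_def Let_def by auto
  then show ?thesis by (metis mset_eq_setD)
qed

lemma maximal_pair_extension:
  assumes "finite U" "X \<subseteq> U" "Z \<subseteq> U" "R X Z"
  obtains X' Z' where "X \<subseteq> X'" "Z \<subseteq> Z'" "X' \<subseteq> U" "Z' \<subseteq> U" "R X' Z'"
    and "\<forall>Y. X' \<subset> Y \<and> Y \<subseteq> U \<longrightarrow> \<not> R Y Z'" and "\<forall>Y. Z' \<subset> Y \<and> Y \<subseteq> U \<longrightarrow> \<not> R X' Y"
proof -
  let ?M = "{(X', Z'). X \<subseteq> X' \<and> Z \<subseteq> Z' \<and> X' \<subseteq> U \<and> Z' \<subseteq> U \<and> R X' Z'}"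
  have "?M \<subseteq> Pow U \<times> Pow U" by blast
  then have "finite ?M" by (rule finite_subset) (simp add: assms(1))
  moreover have "(X, Z) \<in> ?M" using assms by simp
  ultimately obtain m where m: "m \<in> ?M" and max: "\<forall>b\<in>?M. m \<le> b \<longrightarrow> m = b"
    using finite_has_maximal2[of ?M "(X, Z)"] by auto
  obtain X' Z' where m_eq: "m = (X', Z')" by (cases m)
  have M: "X \<subseteq> X'" "Z \<subseteq> Z'" "X' \<subseteq> U" "Z' \<subseteq> U" "R X' Z'" using m by (simp_all add: m_eq)
  have max_X: "\<forall>Y. X' \<subset> Y \<and> Y \<subseteq> U \<longrightarrow> \<not> R Y Z'"
  proof (intro allI impI notI)
    fix Y assume Y: "X' \<subset> Y \<and> Y \<subseteq> U" and "R Y Z'"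
    then have "(Y, Z') \<in> ?M" using M by blast
    moreover have "m \<le> (Y, Z')" using Y by (simp add: m_eq less_eq_prod_def less_imp_le)
    ultimately show False using max Y by (auto simp: m_eq)
  qed
  have max_Z: "\<forall>W. Z' \<subset> W \<and> W \<subseteq> U \<longrightarrow> \<not> R X' W"
  proof (intro allI impI notI)
    fix W assume W: "Z' \<subset> W \<and> W \<subseteq> U" and "R X' W"
    then have "(X', W) \<in> ?M" using M by blast
    moreover have "m \<le> (X', W)" using W by (simp add: m_eq less_eq_prod_def less_imp_le)
    ultimately show False using max W by (auto simp: m_eq)
  qed
  show ?thesis by (rule that[OF M max_X max_Z])
qed

(* A list of maximal total size cannot be enlarged in any single entry. *)
lemma maximal_list_extension:
  assumes "finite U" "set L \<subseteq> Pow U" "Q L"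
  obtains L' where "list_all2 (\<subseteq>) L L'" "set L' \<subseteq> Pow U" "Q L'"
    and "\<forall>j < length L'. \<forall>Y. L' ! j \<subset> Y \<and> Y \<subseteq> U \<longrightarrow> \<not> Q (L'[j := Y])"
proof -
  let ?M = "{L'. list_all2 (\<subseteq>) L L' \<and> set L' \<subseteq> Pow U \<and> Q L'}"
  let ?size = "\<lambda>L' :: 'a set list. sum_list (map card L')"
  have "?M \<subseteq> {L'. set L' \<subseteq> Pow U \<and> length L' = length L}"
    by (auto dest: list_all2_lengthD)
  then have "finite ?M"
    using finite_lists_length_eq[of "Pow U" "length L"] assms(1) finite_subset by blast
  moreover have "L \<in> ?M" using assms by (simp add: list_all2_refl)
  ultimately obtain m where m: "m \<in> ?M" and "?size m = Max (?size ` ?M)"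
    using Max_in[of "?size ` ?M"] by fastforce
  then have max: "\<And>L'. L' \<in> ?M \<Longrightarrow> \<not> ?size m < ?size L'"
    using Max_ge[OF finite_imageI[OF \<open>finite ?M\<close>, of ?size]] by (simp add: not_less)
  show ?thesis
  proof (rule that)
    show "\<forall>j < length m. \<forall>Y. m ! j \<subset> Y \<and> Y \<subseteq> U \<longrightarrow> \<not> Q (m[j := Y])"
    proof (intro allI impI notI)
      fix j Y assume j: "j < length m" and Y: "m ! j \<subset> Y \<and> Y \<subseteq> U" and "Q (m[j := Y])"
      moreover have "L ! i \<subseteq> m[j := Y] ! i" if "i < length L" for i
      proof -
        have "L ! i \<subseteq> m ! i" using m that by (simp add: list_all2_conv_all_nth)
        then show ?thesis using Y j by (auto simp: nth_list_update)
      qed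
      then have "list_all2 (\<subseteq>) L (m[j := Y])"
        using m by (auto simp: list_all2_conv_all_nth)
      moreover have "set (m[j := Y]) \<subseteq> Pow U"
        using set_update_subset_insert[of m j Y] m Y by blast
      ultimately have "m[j := Y] \<in> ?M" by blast
      have "finite Y" using Y assms(1) finite_subset by blast
      then have "card (m ! j) < card Y" using Y psubset_card_mono by blast
      then have "?size m < ?size (m[j := Y])"
        using j elem_le_sum_list[of j "map card m"] by (simp add: map_update sum_list_update)
      with \<open>m[j := Y] \<in> ?M\<close> show False using max by blast
    qed
  qed (use m in auto)
qed

definition one_edge_witness :: "'o problem \<Rightarrow> nat \<Rightarrow> 'o set set \<Rightarrow> 'o set set \<Rightarrow> 'o set \<times> 'o set" where
  "one_edge_witness P \<Delta> X Z =
     (SOME yz. fst yz \<in> X \<and> snd yz \<in> Z \<and> {#fst yz, snd yz#} \<in> gP (half_problem P) \<Delta>)"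

lemma one_edge_witness_spec:
  assumes "{#X, Z#} \<in> gP (one_problem P) \<Delta>"
  defines "yz \<equiv> one_edge_witness P \<Delta> X Z"
  shows "fst yz \<in> X" and "snd yz \<in> Z" and "{#fst yz, snd yz#} \<in> gP (half_problem P) \<Delta>"
proof -
  obtain y z where "y \<in> X" "z \<in> Z" "{#y, z#} \<in> gP (half_problem P) \<Delta>"
    using assms(1) unfolding one_edge_iff by blast
  then have "\<exists>yz. fst yz \<in> X \<and> snd yz \<in> Z \<and> {#fst yz, snd yz#} \<in> gP (half_problem P) \<Delta>"
    by (intro exI[of _ "(y, z)"]) simp
  then have "fst yz \<in> X \<and> snd yz \<in> Z \<and> {#fst yz, snd yz#} \<in> gP (half_problem P) \<Delta>"
    unfolding yz_def one_edge_witness_def by (rule someI_ex)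
  then show "fst yz \<in> X" "snd yz \<in> Z" "{#fst yz, snd yz#} \<in> gP (half_problem P) \<Delta>" by auto
qed

definition half_node_witness :: "'o problem \<Rightarrow> nat \<Rightarrow> 'o set list \<Rightarrow> 'o list" where
  "half_node_witness P \<Delta> Ys = (SOME ys. list_all2 (\<in>) ys Ys \<and> mset ys \<in> hP P \<Delta>)"

lemma half_node_witness_spec:
  assumes "mset Ys \<in> hP (half_problem P) \<Delta>"
  shows "list_all2 (\<in>) (half_node_witness P \<Delta> Ys) Ys" and "mset (half_node_witness P \<Delta> Ys) \<in> hP P \<Delta>"
proof -
  have "\<exists>ys. list_all2 (\<in>) ys Ys \<and> mset ys \<in> hP P \<Delta>"
    using half_nodeE[OF assms] by blast
  then have "list_all2 (\<in>) (half_node_witness P \<Delta> Ys) Ys \<and> mset (half_node_witness P \<Delta> Ys) \<in> hP P \<Delta>"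
    unfolding half_node_witness_def by (rule someI_ex)
  then show "list_all2 (\<in>) (half_node_witness P \<Delta> Ys) Ys" "mset (half_node_witness P \<Delta> Ys) \<in> hP P \<Delta>"
    by auto
qed

definition half_edge_extension :: "'o problem \<Rightarrow> nat \<Rightarrow> 'o set \<Rightarrow> 'o set \<Rightarrow> 'o set \<times> 'o set" where
  "half_edge_extension P \<Delta> X Z =
     (SOME YZ. X \<subseteq> fst YZ \<and> Z \<subseteq> snd YZ \<and> {#fst YZ, snd YZ#} \<in> gP (half_problem P) \<Delta>)"

lemma half_edge_extension_spec:
  assumes "finite (fP P \<Delta>)" "X \<subseteq> fP P \<Delta>" "Z \<subseteq> fP P \<Delta>" "all_g P \<Delta> X Z"
  defines "YZ \<equiv> half_edge_extension P \<Delta> X Z"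
  shows "X \<subseteq> fst YZ" and "Z \<subseteq> snd YZ" and "{#fst YZ, snd YZ#} \<in> gP (half_problem P) \<Delta>"
proof -
  obtain X' Z' where ext: "X \<subseteq> X'" "Z \<subseteq> Z'" "X' \<subseteq> fP P \<Delta>" "Z' \<subseteq> fP P \<Delta>" "all_g P \<Delta> X' Z'"
    "\<forall>Y. X' \<subset> Y \<and> Y \<subseteq> fP P \<Delta> \<longrightarrow> \<not> all_g P \<Delta> Y Z'"
    "\<forall>Y. Z' \<subset> Y \<and> Y \<subseteq> fP P \<Delta> \<longrightarrow> \<not> all_g P \<Delta> X' Y"
    using maximal_pair_extension[of "fP P \<Delta>" X Z "all_g P \<Delta>", OF assms(1-4)] .
  then have "{#X', Z'#} \<in> gP (half_problem P) \<Delta>" by (intro half_edgeI)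
  with ext(1,2) have "\<exists>YZ. X \<subseteq> fst YZ \<and> Z \<subseteq> snd YZ \<and> {#fst YZ, snd YZ#} \<in> gP (half_problem P) \<Delta>"
    by (intro exI[of _ "(X', Z')"]) simp
  then have "X \<subseteq> fst YZ \<and> Z \<subseteq> snd YZ \<and> {#fst YZ, snd YZ#} \<in> gP (half_problem P) \<Delta>"
    unfolding YZ_def half_edge_extension_def by (rule someI_ex)
  then show "X \<subseteq> fst YZ" "Z \<subseteq> snd YZ" "{#fst YZ, snd YZ#} \<in> gP (half_problem P) \<Delta>" by auto
qed

definition one_node_extension :: "'o problem \<Rightarrow> nat \<Rightarrow> 'o set set list \<Rightarrow> 'o set set list" where
  "one_node_extension P \<Delta> L = (SOME L'. list_all2 (\<subseteq>) L L' \<and> mset L' \<in> hP (one_problem P) \<Delta>)"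

lemma one_node_extension_spec:
  assumes "finite (fP P \<Delta>)" "length L \<le> \<Delta>" "set L \<subseteq> Pow (Pow (fP P \<Delta>))"
    and "all_h (half_problem P) \<Delta> L"
  shows "list_all2 (\<subseteq>) L (one_node_extension P \<Delta> L)"
    and "mset (one_node_extension P \<Delta> L) \<in> hP (one_problem P) \<Delta>"
proof -
  obtain L' where L': "list_all2 (\<subseteq>) L L'" "set L' \<subseteq> Pow (Pow (fP P \<Delta>))"
    "all_h (half_problem P) \<Delta> L'"
    "\<forall>j < length L'. \<forall>Y. L' ! j \<subset> Y \<and> Y \<subseteq> Pow (fP P \<Delta>) \<longrightarrow> \<not> all_h (half_problem P) \<Delta> (L'[j := Y])"
    using maximal_list_extension[of "Pow (fP P \<Delta>)" L "all_h (half_problem P) \<Delta>"] assms(1,3,4)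
    by (metis finite_Pow_iff)
  moreover have "length L' \<le> \<Delta>" using L'(1) assms(2) by (simp add: list_all2_lengthD)
  ultimately have "mset L' \<in> hP (one_problem P) \<Delta>"
    unfolding one_problem_def Let_def problem.select_convs fP_half_problem by blast
  with L'(1) have "\<exists>L'. list_all2 (\<subseteq>) L L' \<and> mset L' \<in> hP (one_problem P) \<Delta>" by blast
  then have "list_all2 (\<subseteq>) L (one_node_extension P \<Delta> L) \<and>
      mset (one_node_extension P \<Delta> L) \<in> hP (one_problem P) \<Delta>"
    unfolding one_node_extension_def by (rule someI_ex)
  then show "list_all2 (\<subseteq>) L (one_node_extension P \<Delta> L)"
    "mset (one_node_extension P \<Delta> L) \<in> hP (one_problem P) \<Delta>" by auto
qed

section \<open>Algorithms on oriented classes\<close>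

locale oriented_class =
  fixes C :: "'l pgraph set" and ori :: "'l \<Rightarrow> bool" and \<Delta> :: nat
  assumes simple: "G \<in> C \<Longrightarrow> simple_connected_pgraph G"
    and deg_le: "G \<in> C \<Longrightarrow> v < nv G \<Longrightarrow> deg G v \<le> \<Delta>"
    and ori_conn: "G \<in> C \<Longrightarrow> p \<in> ports G \<Longrightarrow> ori (inp G p) \<noteq> ori (inp G (conn G p))"
begin

lemma conn_port:
  assumes "G \<in> C" "v < nv G" "k < deg G v"
  shows "fst (conn G (v, k)) < nv G" and "snd (conn G (v, k)) < deg G (fst (conn G (v, k)))"
    and "conn G (conn G (v, k)) = (v, k)"
  using conn_in_ports[OF simple[OF assms(1)], of "(v, k)"] conn_conn[OF simple[OF assms(1)], of "(v, k)"]
    assms(2,3)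
  by (auto simp: mem_ports_iff ports_def)

(* Both endpoints of an edge read their labels off the same pair f a b; the orientation of the
   edge decides which endpoint supplies the first argument. *)
definition oriented_choice ::
    "('a \<Rightarrow> 'a \<Rightarrow> 'b \<times> 'b) \<Rightarrow> ('l pgraph \<Rightarrow> nat \<Rightarrow> nat \<Rightarrow> 'a) \<Rightarrow> 'l pgraph \<Rightarrow> nat \<Rightarrow> nat \<Rightarrow> 'b" where
  "oriented_choice f X G v k =
     (let u = fst (conn G (v, k)); j = snd (conn G (v, k)) in
      if ori (inp G (v, k)) then fst (f (X G v k) (X G u j)) else snd (f (X G u j) (X G v k)))"

lemma oriented_choice_edge:
  assumes G: "G \<in> C" "v < nv G" "k < deg G v" and uj: "conn G (v, k) = (u, j)"
    and f: "\<And>a b. {#a, b#} = {#X G v k, X G u j#} \<Longrightarrow>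
      R a (fst (f a b)) \<and> R b (snd (f a b)) \<and> {#fst (f a b), snd (f a b)#} \<in> S"
  shows "R (X G v k) (oriented_choice f X G v k)"
    and "{#oriented_choice f X G v k, oriented_choice f X G u j#} \<in> S"
proof -
  have conn_back: "conn G (u, j) = (v, k)" using conn_port(3)[OF G] uj by simp
  have "(v, k) \<in> ports G" using G by (simp add: mem_ports_iff)
  then have ori: "ori (inp G (u, j)) \<longleftrightarrow> \<not> ori (inp G (v, k))"
    using ori_conn[OF G(1)] uj by fastforce
  have "{#X G u j, X G v k#} = {#X G v k, X G u j#}" by (simp add: add_mset_commute)
  then show "R (X G v k) (oriented_choice f X G v k)"
    "{#oriented_choice f X G v k, oriented_choice f X G u j#} \<in> S"
    using f[OF refl] f[of "X G u j" "X G v k"] ori uj conn_back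
    by (auto simp: oriented_choice_def Let_def add_mset_commute)
qed

lemma oriented_choice_cong:
  assumes "inp H (w, k) = inp G (v, k)" and "X H w k = X G v k"
    and "X H (fst (conn H (w, k))) (snd (conn H (w, k))) = X G (fst (conn G (v, k))) (snd (conn G (v, k)))"
  shows "oriented_choice f X H w k = oriented_choice f X G v k"
  using assms by (simp add: oriented_choice_def Let_def)

lemma t_round_alg_port_eq:
  assumes "t_round_alg C t A" "0 < t" "H \<in> C" "q \<in> ports H" "G \<in> C" "p \<in> ports G"
    and "nbhd_iso2 t H (fst q) (fst (conn H q)) G (fst p) (fst (conn G p))"
  shows "A H (fst q) (snd q) = A G (fst p) (snd p)"
proof -
  obtain w i where q: "q = (w, i)" "w < nv H" "i < deg H w" using assms(4) by (auto simp: ports_def)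
  have "i < deg G (fst p)" "fst (conn G (fst p, i)) = fst (conn G p)"
    using nbhd_iso2_conn[OF assms(7)[unfolded q(1) fst_conv] assms(2) q(2,3)] by simp_all
  then have "(fst p, i) = p"
    using ports_eqI[OF simple[OF assms(5)] _ assms(6)] assms(6) by (auto simp: ports_def)
  moreover have "\<forall>i < deg H w. A H w i = A G (fst p) i"
    using assms(1,3,5) q(2) assms(6) nbhd_iso2_imp_nbhd_iso[OF assms(7)]
    unfolding t_round_alg_def q(1) by (auto simp: ports_def)
  ultimately show ?thesis using q by (metis fst_conv snd_conv)
qed

definition lift_half_alg ::
    "'o problem \<Rightarrow> ('l pgraph \<Rightarrow> nat \<Rightarrow> nat \<Rightarrow> 'o set set) \<Rightarrow> 'l pgraph \<Rightarrow> nat \<Rightarrow> nat \<Rightarrow> 'o set" where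
  "lift_half_alg P A' = oriented_choice (one_edge_witness P \<Delta>) A'"

definition lift_alg ::
    "'o problem \<Rightarrow> ('l pgraph \<Rightarrow> nat \<Rightarrow> nat \<Rightarrow> 'o set set) \<Rightarrow> 'l pgraph \<Rightarrow> nat \<Rightarrow> nat \<Rightarrow> 'o" where
  "lift_alg P A' G v k = half_node_witness P \<Delta> (map (lift_half_alg P A' G v) [0..<deg G v]) ! k"

context
  fixes P :: "'o problem" and A' :: "'l pgraph \<Rightarrow> nat \<Rightarrow> nat \<Rightarrow> 'o set set"
  assumes A'_solves: "solves C \<Delta> (one_problem P) A'"
begin

lemma lift_half_alg_edge:
  assumes "G \<in> C" "v < nv G" "k < deg G v"
  shows "lift_half_alg P A' G v k \<in> A' G v k"
    and "{#lift_half_alg P A' G v k, lift_half_alg P A' G (fst (conn G (v, k))) (snd (conn G (v, k)))#}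
           \<in> gP (half_problem P) \<Delta>"
proof -
  let ?u = "fst (conn G (v, k))" and ?j = "snd (conn G (v, k))"
  have edge: "{#A' G v k, A' G ?u ?j#} \<in> gP (one_problem P) \<Delta>"
    using A'_solves assms unfolding solves_def by blast
  have "fst (one_edge_witness P \<Delta> a b) \<in> a \<and> snd (one_edge_witness P \<Delta> a b) \<in> b \<and>
      {#fst (one_edge_witness P \<Delta> a b), snd (one_edge_witness P \<Delta> a b)#} \<in> gP (half_problem P) \<Delta>"
    if "{#a, b#} = {#A' G v k, A' G ?u ?j#}" for a b
    using one_edge_witness_spec[of a b] edge that by simp
  from oriented_choice_edge[OF assms prod.collapse[symmetric],
      where R = "\<lambda>Y y. y \<in> Y" and X = A' and f = "one_edge_witness P \<Delta>", OF this]
  show "lift_half_alg P A' G v k \<in> A' G v k"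
    "{#lift_half_alg P A' G v k, lift_half_alg P A' G ?u ?j#} \<in> gP (half_problem P) \<Delta>"
    unfolding lift_half_alg_def by simp_all
qed

lemma lift_half_alg_node:
  assumes "G \<in> C" "v < nv G"
  shows "mset (map (lift_half_alg P A' G v) [0..<deg G v]) \<in> hP (half_problem P) \<Delta>"
proof -
  have "all_h (half_problem P) \<Delta> (map (A' G v) [0..<deg G v])"
    using A'_solves assms one_node_all_h unfolding solves_def by blast
  moreover have "list_all2 (\<in>) (map (lift_half_alg P A' G v) [0..<deg G v]) (map (A' G v) [0..<deg G v])"
    using lift_half_alg_edge(1)[OF assms] by (simp add: list_all2_conv_all_nth)
  ultimately show ?thesis unfolding all_h_def by blast
qed

lemma lift_alg_in_lift_half_alg:
  assumes "G \<in> C" "v < nv G" "k < deg G v"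
  shows "lift_alg P A' G v k \<in> lift_half_alg P A' G v k"
  using half_node_witness_spec(1)[OF lift_half_alg_node[OF assms(1,2)]] assms(3)
  unfolding lift_alg_def by (auto simp: list_all2_conv_all_nth)

lemma lift_alg_solves: "solves C \<Delta> P (lift_alg P A')"
  unfolding solves_def
proof (intro ballI allI impI conjI)
  fix G v assume G: "G \<in> C" and v: "v < nv G"
  {
    fix k assume k: "k < deg G v"
    let ?u = "fst (conn G (v, k))" and ?j = "snd (conn G (v, k))"
    have "A' G v k \<in> fP (one_problem P) \<Delta>" using A'_solves G v k unfolding solves_def by blast
    then show "lift_alg P A' G v k \<in> fP P \<Delta>"
      using lift_alg_in_lift_half_alg[OF G v k] lift_half_alg_edge(1)[OF G v k] by auto
    have "all_g P \<Delta> (lift_half_alg P A' G v k) (lift_half_alg P A' G ?u ?j)"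
      using lift_half_alg_edge(2)[OF G v k] unfolding half_edge_iff by blast
    then show "{#lift_alg P A' G v k, lift_alg P A' G ?u ?j#} \<in> gP P \<Delta>"
      using lift_alg_in_lift_half_alg[OF G v k] lift_alg_in_lift_half_alg[OF G conn_port(1,2)[OF G v k]]
      unfolding all_g_def by blast
  }
  have "map (lift_alg P A' G v) [0..<deg G v] =
      half_node_witness P \<Delta> (map (lift_half_alg P A' G v) [0..<deg G v])"
    using list_all2_lengthD[OF half_node_witness_spec(1)[OF lift_half_alg_node[OF G v]]]
    by (intro nth_equalityI) (simp_all add: lift_alg_def)
  then show "mset (map (lift_alg P A' G v) [0..<deg G v]) \<in> hP P \<Delta>"
    using half_node_witness_spec(2)[OF lift_half_alg_node[OF G v]] by simp
qed

end

lemma lift_alg_rounds: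
  assumes "0 < t" and "t_round_alg C (t - 1) A'"
  shows "t_round_alg C t (lift_alg P A')"
  unfolding t_round_alg_def
proof (intro ballI allI impI)
  fix G H v v' i assume G: "G \<in> C" and H: "H \<in> C" and v: "v < nv G" and v': "v' < nv H"
    and iso: "nbhd_iso t G v H v'" and "i < deg G v"
  have deg: "deg H v' = deg G v" using nbhd_iso_deg[OF iso] .
  have "nbhd_iso (t - 1) G v H v'"
    using nbhd_iso_restrict[OF simple[OF G] simple[OF H] v v' iso] by simp
  then have A'_v: "A' H v' k = A' G v k" if "k < deg G v" for k
    using assms(2) G H v v' that unfolding t_round_alg_def by metis
  have "lift_half_alg P A' H v' k = lift_half_alg P A' G v k" if k: "k < deg G v" for k
  proof -
    obtain u' where u': "conn H (v', k) = (u', snd (conn G (v, k)))"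
      and iso_u: "nbhd_iso (t - 1) G (fst (conn G (v, k))) H u'"
      using nbhd_iso_conn[OF simple[OF G] simple[OF H] v v' iso assms(1) k] .
    have "u' < nv H" using conn_port(1)[OF H v'] u' k deg by (metis fst_conv)
    then have A'_u: "A' H u' (snd (conn G (v, k))) = A' G (fst (conn G (v, k))) (snd (conn G (v, k)))"
      using assms(2) G H conn_port(1,2)[OF G v k] iso_u unfolding t_round_alg_def by metis
    show ?thesis
      unfolding lift_half_alg_def
      by (rule oriented_choice_cong) (use nbhd_iso_inp[OF iso k] A'_v[OF k] A'_u u' in simp_all)
  qed
  then have "map (lift_half_alg P A' H v') [0..<deg H v'] = map (lift_half_alg P A' G v) [0..<deg G v]"
    using deg by simp
  then show "lift_alg P A' G v i = lift_alg P A' H v' i"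
    by (simp only: lift_alg_def)
qed

end

section \<open>Round elimination\<close>

locale independent_class = oriented_class C ori \<Delta>
  for C :: "'l pgraph set" and ori :: "'l \<Rightarrow> bool" and \<Delta> :: nat +
  fixes t :: nat
  assumes t_pos: "0 < t" and independent: "t_independent C t"
begin

definition edge_outputs :: "('l pgraph \<Rightarrow> nat \<Rightarrow> nat \<Rightarrow> 'o) \<Rightarrow> 'l pgraph \<Rightarrow> nat \<Rightarrow> nat \<Rightarrow> 'o set" where
  "edge_outputs A G v u = {A H (fst p) (snd p) | H p. H \<in> C \<and> p \<in> ports H \<and>
      enbhd_iso t H (fst p) (fst (conn H p)) G v u}"

definition elim_half_alg ::
    "'o problem \<Rightarrow> ('l pgraph \<Rightarrow> nat \<Rightarrow> nat \<Rightarrow> 'o) \<Rightarrow> 'l pgraph \<Rightarrow> nat \<Rightarrow> nat \<Rightarrow> 'o set" where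
  "elim_half_alg P A =
     oriented_choice (half_edge_extension P \<Delta>) (\<lambda>G v k. edge_outputs A G v (fst (conn G (v, k))))"

definition node_candidates ::
    "'o problem \<Rightarrow> ('l pgraph \<Rightarrow> nat \<Rightarrow> nat \<Rightarrow> 'o) \<Rightarrow> 'l pgraph \<Rightarrow> nat \<Rightarrow> nat \<Rightarrow> 'o set set" where
  "node_candidates P A G v k =
     {elim_half_alg P A H w k | H w. H \<in> C \<and> w < nv H \<and> nbhd_iso (t - 1) H w G v}"

definition elim_alg ::
    "'o problem \<Rightarrow> ('l pgraph \<Rightarrow> nat \<Rightarrow> nat \<Rightarrow> 'o) \<Rightarrow> 'l pgraph \<Rightarrow> nat \<Rightarrow> nat \<Rightarrow> 'o set set" where
  "elim_alg P A G v k = one_node_extension P \<Delta> (map (node_candidates P A G v) [0..<deg G v]) ! k"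

lemma edge_outputs_enbhd_iso:
  assumes "enbhd_iso t G v u G' v' u'" "adj G v u" "adj G u v"
  shows "edge_outputs A G v u = edge_outputs A G' v' u'"
proof -
  have "enbhd_iso t H x y G v u \<longleftrightarrow> enbhd_iso t H x y G' v' u'" for H x y
    using enbhd_iso_trans[OF _ assms(1)] enbhd_iso_trans[OF _ enbhd_iso_sym[OF assms(1) t_pos assms(2,3)]]
    by blast
  then show ?thesis unfolding edge_outputs_def by simp
qed

lemma elim_half_alg_enbhd_iso:
  assumes H: "H \<in> C" "w < nv H" "k < deg H w" and H': "H' \<in> C" "w' < nv H'"
    and iso: "enbhd_iso t H w (fst (conn H (w, k))) H' w' (fst (conn H' (w', k)))"
  shows "elim_half_alg P A H' w' k = elim_half_alg P A H w k"
proof -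
  let ?u = "fst (conn H (w, k))" and ?u' = "fst (conn H' (w', k))"
  have adj: "adj H w ?u" "adj H ?u w"
    using adj_conn[OF H(3)] adj_sym[OF simple[OF H(1)] H(2)] by blast+
  have deg: "deg H' w' = deg H w" and inp: "inp H' (w', k) = inp H (w, k)"
    using enbhd_iso_deg_inp[OF iso t_pos adj(2)] H(3) by simp_all
  have "edge_outputs A H w ?u = edge_outputs A H' w' ?u'"
    using edge_outputs_enbhd_iso[OF iso adj] .
  moreover have "edge_outputs A H ?u w = edge_outputs A H' ?u' w'"
    using edge_outputs_enbhd_iso[OF enbhd_iso_swap[THEN iffD1, OF iso] adj(2,1)] .
  moreover have "fst (conn H (conn H (w, k))) = w" "fst (conn H' (conn H' (w', k))) = w'"
    using conn_port(3)[OF H] conn_port(3)[OF H'] H(3) deg by simp_all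
  ultimately show ?thesis
    unfolding elim_half_alg_def using inp by (intro oriented_choice_cong) simp_all
qed

lemma node_candidates_nbhd_iso:
  "nbhd_iso (t - 1) G v G' v' \<Longrightarrow> node_candidates P A G v k = node_candidates P A G' v' k"
  unfolding node_candidates_def by (meson nbhd_iso_sym nbhd_iso_trans)

lemma elim_half_alg_in_node_candidates:
  "G \<in> C \<Longrightarrow> v < nv G \<Longrightarrow> elim_half_alg P A G v k \<in> node_candidates P A G v k"
  unfolding node_candidates_def using nbhd_iso_refl by blast

lemma elim_alg_rounds: "t_round_alg C (t - 1) (elim_alg P A)"
  unfolding t_round_alg_def
proof (intro ballI allI impI)
  fix G H v v' i assume "G \<in> C" "H \<in> C" "v < nv G" "v' < nv H" and iso: "nbhd_iso (t - 1) G v H v'"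
  then have "map (node_candidates P A G v) [0..<deg G v] = map (node_candidates P A H v') [0..<deg H v']"
    using nbhd_iso_deg[OF iso] node_candidates_nbhd_iso[OF iso] by (auto intro: map_cong)
  then show "elim_alg P A G v i = elim_alg P A H v' i" by (simp only: elim_alg_def)
qed

lemma node_candidates_realized:
  assumes G: "G \<in> C" "v < nv G"
    and ys: "list_all2 (\<in>) ys (map (node_candidates P A G v) [0..<deg G v])"
  obtains H w where "H \<in> C" "w < nv H" "nbhd_iso (t - 1) H w G v"
    and "ys = map (elim_half_alg P A H w) [0..<deg H w]"
proof -
  have "\<forall>k < deg G v. \<exists>H w. H \<in> C \<and> w < nv H \<and> nbhd_iso (t - 1) H w G v \<and>
      ys ! k = elim_half_alg P A H w k"
    using ys unfolding node_candidates_def by (auto simp: list_all2_conv_all_nth; blast)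
  then obtain Hs ws where Hs: "\<forall>k < deg G v. Hs k \<in> C \<and> ws k < nv (Hs k) \<and>
      nbhd_iso (t - 1) (Hs k) (ws k) G v \<and> ys ! k = elim_half_alg P A (Hs k) (ws k) k"
    by metis
  obtain H w where H: "H \<in> C" "w < nv H" "nbhd_iso (t - 1) H w G v"
    and edges: "\<forall>k < deg G v. enbhd_iso t H w (fst (conn H (w, k))) (Hs k) (ws k) (fst (conn (Hs k) (ws k, k)))"
  proof (cases "deg G v = 0")
    case True
    then show ?thesis using that[OF G nbhd_iso_refl] by simp
  next
    case False
    then show ?thesis using that t_independentD_node[OF independent G] Hs by blast
  qed
  have deg: "deg G v = deg H w" using nbhd_iso_deg[OF H(3)] .
  have "ys ! k = elim_half_alg P A H w k" if "k < deg G v" for k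
    using elim_half_alg_enbhd_iso[OF H(1,2) _ _ _ edges[rule_format, OF that]] Hs that deg by simp
  moreover have "length ys = deg G v" using ys by (simp add: list_all2_lengthD)
  ultimately have "ys = map (elim_half_alg P A H w) [0..<deg H w]"
    using deg by (intro nth_equalityI) simp_all
  with H that show ?thesis by blast
qed

context
  fixes P :: "'o problem" and A :: "'l pgraph \<Rightarrow> nat \<Rightarrow> nat \<Rightarrow> 'o"
  assumes finite_labels: "finite (fP P \<Delta>)"
    and A_rounds: "t_round_alg C t A" and A_solves: "solves C \<Delta> P A"
begin

lemma edge_outputs_subset: "edge_outputs A G v u \<subseteq> fP P \<Delta>"
  using A_solves unfolding edge_outputs_def solves_def by (auto simp: ports_def)

lemma output_in_edge_outputs:
  "G \<in> C \<Longrightarrow> v < nv G \<Longrightarrow> k < deg G v \<Longrightarrow> A G v k \<in> edge_outputs A G v (fst (conn G (v, k)))"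
  unfolding edge_outputs_def using enbhd_iso_refl
  by (intro CollectI exI[of _ G] exI[of _ "(v, k)"]) (simp add: mem_ports_iff)

lemma edge_outputs_all_g:
  assumes G: "G \<in> C" "v < nv G" "k < deg G v"
  shows "all_g P \<Delta> (edge_outputs A G v (fst (conn G (v, k)))) (edge_outputs A G (fst (conn G (v, k))) v)"
  unfolding all_g_def
proof (intro ballI)
  let ?u = "fst (conn G (v, k))"
  fix y z assume "y \<in> edge_outputs A G v ?u" and "z \<in> edge_outputs A G ?u v"
  then obtain H1 p1 H2 p2 where y: "y = A H1 (fst p1) (snd p1)" "H1 \<in> C" "p1 \<in> ports H1"
      "enbhd_iso t H1 (fst p1) (fst (conn H1 p1)) G v ?u"
    and z: "z = A H2 (fst p2) (snd p2)" "H2 \<in> C" "p2 \<in> ports H2"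
      "enbhd_iso t H2 (fst p2) (fst (conn H2 p2)) G ?u v"
    unfolding edge_outputs_def by blast
  define p2' where "p2' = conn H2 p2"
  have p2': "p2' \<in> ports H2" "conn H2 p2' = p2"
    using conn_in_ports[OF simple[OF z(2)] z(3)] conn_conn[OF simple[OF z(2)] z(3)] by (simp_all add: p2'_def)
  have "enbhd_iso t H2 (fst p2') (fst (conn H2 p2')) G v ?u"
    using enbhd_iso_swap[THEN iffD1, OF z(4)] p2' by (simp add: p2'_def)
  then obtain H q where H: "H \<in> C" "q \<in> ports H"
    and iso1: "nbhd_iso2 t H (fst q) (fst (conn H q)) H1 (fst p1) (fst (conn H1 p1))"
    and iso2: "nbhd_iso2 t H (fst (conn H q)) (fst q) H2 (fst (conn H2 p2')) (fst p2')"
    using t_independentD_edge[OF independent G(1) _ y(2-4) z(2) p2'(1)] G by (auto simp: mem_ports_iff)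
  have "y = A H (fst q) (snd q)"
    using t_round_alg_port_eq[OF A_rounds t_pos H y(2,3) iso1] y(1) by simp
  moreover have "z = A H (fst (conn H q)) (snd (conn H q))"
    using t_round_alg_port_eq[OF A_rounds t_pos H(1) conn_in_ports[OF simple[OF H(1)] H(2)] z(2,3)]
      iso2 conn_conn[OF simple[OF H(1)] H(2)] p2' z(1) by (simp add: p2'_def)
  moreover obtain w i where "q = (w, i)" "w < nv H" "i < deg H w" using H(2) by (auto simp: ports_def)
  ultimately show "{#y, z#} \<in> gP P \<Delta>" using A_solves H(1) unfolding solves_def by auto
qed

lemma elim_half_alg_edge:
  assumes G: "G \<in> C" "v < nv G" "k < deg G v"
  shows "A G v k \<in> elim_half_alg P A G v k"
    and "{#elim_half_alg P A G v k, elim_half_alg P A G (fst (conn G (v, k))) (snd (conn G (v, k)))#}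
           \<in> gP (half_problem P) \<Delta>"
proof -
  let ?X = "\<lambda>G v k. edge_outputs A G v (fst (conn G (v, k)))"
  let ?u = "fst (conn G (v, k))" and ?j = "snd (conn G (v, k))"
  have "?X G ?u ?j = edge_outputs A G ?u v" using conn_port(3)[OF G] by simp
  then have g: "all_g P \<Delta> (?X G v k) (?X G ?u ?j)" using edge_outputs_all_g[OF G] by simp
  have "a \<subseteq> fst (half_edge_extension P \<Delta> a b) \<and> b \<subseteq> snd (half_edge_extension P \<Delta> a b) \<and>
      {#fst (half_edge_extension P \<Delta> a b), snd (half_edge_extension P \<Delta> a b)#} \<in> gP (half_problem P) \<Delta>"
    if "{#a, b#} = {#?X G v k, ?X G ?u ?j#}" for a b
    using that[unfolded doubleton_mset_eq_iff]
  proof (elim disjE conjE)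
    assume "a = ?X G v k" "b = ?X G ?u ?j"
    then show ?thesis
      using half_edge_extension_spec[OF finite_labels edge_outputs_subset edge_outputs_subset g] by simp
  next
    assume "a = ?X G ?u ?j" "b = ?X G v k"
    then show ?thesis
      using half_edge_extension_spec[OF finite_labels edge_outputs_subset edge_outputs_subset
          all_g_commute[THEN iffD1, OF g]]
      by simp
  qed
  from oriented_choice_edge[OF G prod.collapse[symmetric],
      where R = "(\<subseteq>)" and X = ?X and f = "half_edge_extension P \<Delta>", OF this]
  have "?X G v k \<subseteq> elim_half_alg P A G v k"
    "{#elim_half_alg P A G v k, elim_half_alg P A G ?u ?j#} \<in> gP (half_problem P) \<Delta>"
    unfolding elim_half_alg_def by simp_all
  then show "A G v k \<in> elim_half_alg P A G v k"
    "{#elim_half_alg P A G v k, elim_half_alg P A G ?u ?j#} \<in> gP (half_problem P) \<Delta>"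
    using output_in_edge_outputs[OF G] by blast+
qed

lemma elim_half_alg_subset:
  assumes "G \<in> C" "v < nv G" "k < deg G v"
  shows "elim_half_alg P A G v k \<subseteq> fP P \<Delta>"
  using elim_half_alg_edge(2)[OF assms] unfolding half_edge_iff by blast

lemma node_candidates_subset:
  assumes "k < deg G v"
  shows "node_candidates P A G v k \<subseteq> Pow (fP P \<Delta>)"
proof
  fix Y assume "Y \<in> node_candidates P A G v k"
  then obtain H w where H: "Y = elim_half_alg P A H w k" "H \<in> C" "w < nv H" "nbhd_iso (t - 1) H w G v"
    unfolding node_candidates_def by blast
  then have "k < deg H w" using nbhd_iso_deg[OF H(4)] assms by simp
  then show "Y \<in> Pow (fP P \<Delta>)" using elim_half_alg_subset[OF H(2,3)] H(1) by simp
qed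

lemma elim_half_alg_node:
  assumes "H \<in> C" "w < nv H"
  shows "mset (map (elim_half_alg P A H w) [0..<deg H w]) \<in> hP (half_problem P) \<Delta>"
proof (rule half_nodeI)
  show "length (map (elim_half_alg P A H w) [0..<deg H w]) \<le> \<Delta>" using deg_le[OF assms] by simp
  show "set (map (elim_half_alg P A H w) [0..<deg H w]) \<subseteq> Pow (fP P \<Delta>)"
    using elim_half_alg_subset[OF assms] by force
  show "list_all2 (\<in>) (map (A H w) [0..<deg H w]) (map (elim_half_alg P A H w) [0..<deg H w])"
    using elim_half_alg_edge(1)[OF assms] by (simp add: list_all2_conv_all_nth)
  show "mset (map (A H w) [0..<deg H w]) \<in> hP P \<Delta>" using A_solves assms unfolding solves_def by blast
qed

lemma node_candidates_all_h:
  assumes "G \<in> C" "v < nv G"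
  shows "all_h (half_problem P) \<Delta> (map (node_candidates P A G v) [0..<deg G v])"
  unfolding all_h_def
proof (intro allI impI)
  fix ys assume "list_all2 (\<in>) ys (map (node_candidates P A G v) [0..<deg G v])"
  then obtain H w where "H \<in> C" "w < nv H" and "ys = map (elim_half_alg P A H w) [0..<deg H w]"
    using node_candidates_realized[OF assms] by blast
  then show "mset ys \<in> hP (half_problem P) \<Delta>" using elim_half_alg_node by simp
qed

lemma elim_alg_solves: "solves C \<Delta> (one_problem P) (elim_alg P A)"
  unfolding solves_def
proof (intro ballI allI impI conjI)
  fix G v assume G: "G \<in> C" and v: "v < nv G"
  let ?L = "\<lambda>v. one_node_extension P \<Delta> (map (node_candidates P A G v) [0..<deg G v])"
  have ext: "list_all2 (\<subseteq>) (map (node_candidates P A G v) [0..<deg G v]) (?L v)"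
    "mset (?L v) \<in> hP (one_problem P) \<Delta>" if "v < nv G" for v
  proof -
    have "set (map (node_candidates P A G v) [0..<deg G v]) \<subseteq> Pow (Pow (fP P \<Delta>))"
      using node_candidates_subset by (simp add: image_subset_iff)
    moreover have "length (map (node_candidates P A G v) [0..<deg G v]) \<le> \<Delta>"
      using deg_le[OF G that] by simp
    ultimately show "list_all2 (\<subseteq>) (map (node_candidates P A G v) [0..<deg G v]) (?L v)"
      "mset (?L v) \<in> hP (one_problem P) \<Delta>"
      using one_node_extension_spec[OF finite_labels _ _ node_candidates_all_h[OF G that]] by simp_all
  qed
  have mem: "elim_half_alg P A G v k \<in> elim_alg P A G v k" if "v < nv G" "k < deg G v" for v k
  proof -
    have "node_candidates P A G v k \<subseteq> elim_alg P A G v k"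
      using list_all2_nthD[OF ext(1)[OF that(1)], of k] that(2) unfolding elim_alg_def by simp
    then show ?thesis using elim_half_alg_in_node_candidates[OF G that(1)] by blast
  qed
  have labels: "elim_alg P A G v k \<in> Pow (Pow (fP P \<Delta>))" if "v < nv G" "k < deg G v" for v k
  proof -
    have "elim_alg P A G v k \<in> set (?L v)"
      using list_all2_lengthD[OF ext(1)[OF that(1)]] that(2) unfolding elim_alg_def by (intro nth_mem) simp
    then show ?thesis using one_node_labels[OF ext(2)[OF that(1)]] by blast
  qed
  {
    fix k assume k: "k < deg G v"
    show "elim_alg P A G v k \<in> fP (one_problem P) \<Delta>" using labels[OF v k] by simp
    show "{#elim_alg P A G v k, elim_alg P A G (fst (conn G (v, k))) (snd (conn G (v, k)))#}
        \<in> gP (one_problem P) \<Delta>"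
      unfolding one_edge_iff
      using labels[OF v k] labels[OF conn_port(1,2)[OF G v k]] mem[OF v k] mem[OF conn_port(1,2)[OF G v k]]
        elim_half_alg_edge(2)[OF G v k] by auto
  }
  have "map (elim_alg P A G v) [0..<deg G v] = ?L v"
    using list_all2_lengthD[OF ext(1)[OF v]] by (intro nth_equalityI) (simp_all add: elim_alg_def)
  then show "mset (map (elim_alg P A G v) [0..<deg G v]) \<in> hP (one_problem P) \<Delta>"
    using ext(2)[OF v] by simp
qed

end

end

theorem theorem3:
  fixes P :: "'o problem"
    and C :: "'l pgraph set"
    and Sig :: "'l set"
    and ori :: "'l \<Rightarrow> bool"
    and n \<Delta> t :: nat
  assumes "problem_wf P"
    and "finite Sig"
    and "\<forall>G\<in>C. simple_connected_pgraph G \<and> nv G = n \<and> max_degree G \<Delta> \<and>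
                 (\<forall>p\<in>ports G. inp G p \<in> Sig)"
    and "\<forall>G\<in>C. \<forall>p\<in>ports G. ori (inp G p) \<noteq> ori (inp G (conn G p))"
    and "t > 0"
    and "t_independent C t"
    and "\<forall>G\<in>C. girth_at_least G (2 * t + 2)"
  shows "(\<exists>A :: 'l pgraph \<Rightarrow> nat \<Rightarrow> nat \<Rightarrow> 'o. t_round_alg C t A \<and> solves C \<Delta> P A) \<longleftrightarrow>
         (\<exists>A :: 'l pgraph \<Rightarrow> nat \<Rightarrow> nat \<Rightarrow> 'o set set.
             t_round_alg C (t - 1) A \<and> solves C \<Delta> (one_problem P) A)"
proof -
  interpret independent_class C ori \<Delta> t
    using assms(3-6) by unfold_locales (auto simp: max_degree_def)
  have "finite (fP P \<Delta>)" using assms(1) unfolding problem_wf_def by blast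
  show ?thesis
  proof
    assume "\<exists>A :: 'l pgraph \<Rightarrow> nat \<Rightarrow> nat \<Rightarrow> 'o. t_round_alg C t A \<and> solves C \<Delta> P A"
    then show "\<exists>A. t_round_alg C (t - 1) A \<and> solves C \<Delta> (one_problem P) A"
      using elim_alg_rounds elim_alg_solves[OF \<open>finite (fP P \<Delta>)\<close>] by blast
  next
    assume "\<exists>A :: 'l pgraph \<Rightarrow> nat \<Rightarrow> nat \<Rightarrow> 'o set set.
      t_round_alg C (t - 1) A \<and> solves C \<Delta> (one_problem P) A"
    then show "\<exists>A. t_round_alg C t A \<and> solves C \<Delta> P A"
      using lift_alg_rounds[OF t_pos] lift_alg_solves by blast
  qed
qed

end
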